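(* Let $\mathbb{X}$ be a smooth reflexive real Banach space with the Kadets–Klee property and $\mathbb{Y}$ a smooth real Banach space. Let $T\in\mathbb{L}(\mathbb{X},\mathbb{Y})$ be of rank one with $\|T\|=1$. If $M_T=\{\pm x\}$ and $(x,Tx)$ is a CPP, then $T$ is not an extreme contraction.
   Context: All Banach spaces are real and of dimension greater than $1$. $\mathbb{X}$ has the Kadets–Klee property if whenever $x_n\rightharpoonup x$ weakly and $\|x_n\|\to\|x\|$, then $x_n\to x$ in norm. $M_T=\{x\in S_{\mathbb{X}}:\|Tx\|=\|T\|\}$. A norm one $T$ is an extreme contraction if it is an extreme point of the closed unit ball of $\mathbb{L}(\mathbb{X},\mathbb{Y})$. $B(x,r)=\{u:\|u-x\|<r\}$. $x\perp_B y$ means $\|x+\lambda y\|\ge\|x\|$ for all real $\lambda$; $x^\perp=\{y:x\perp_By\}$. For $x\in S_{\mathbb{X}}$, $y\in S_{\mathbb{Y}}$, $(x,y)$ is a CPP if there exist $r>0,\mu>0$ such that for all $z\in x^\perp\cap S_{\mathbb{X}}$, all $w\in y^\perp\cap S_{\mathbb{Y}}$ and all $a,b\in\mathbb{R}$, $ax+bz\in B(x,r)\cap S_{\mathbb{X}}$ implies $\|ay+b\mu w\|\le1$. *)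

theory Defs
  imports "HOL-Analysis.Analysis"
begin

definition dim_gt_one :: "'a::real_vector itself \<Rightarrow> bool" where
  "dim_gt_one _ \<longleftrightarrow> (\<exists>u v::'a. u \<noteq> v \<and> independent {u, v})"

definition smooth_space :: "'a::real_normed_vector itself \<Rightarrow> bool" where
  "smooth_space _ \<longleftrightarrow>
     (\<forall>x::'a. norm x = 1 \<longrightarrow> (\<exists>!f::'a \<Rightarrow>\<^sub>L real. norm f = 1 \<and> blinfun_apply f x = 1))"

definition reflexive_space :: "'a::real_normed_vector itself \<Rightarrow> bool" where
  "reflexive_space _ \<longleftrightarrow>
     (\<forall>\<phi>::('a \<Rightarrow>\<^sub>L real) \<Rightarrow>\<^sub>L real. \<exists>x::'a. \<forall>f. blinfun_apply \<phi> f = blinfun_apply f x)"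

definition weak_conv :: "(nat \<Rightarrow> 'a::real_normed_vector) \<Rightarrow> 'a \<Rightarrow> bool" where
  "weak_conv xs x \<longleftrightarrow>
     (\<forall>f::'a \<Rightarrow>\<^sub>L real. (\<lambda>n. blinfun_apply f (xs n)) \<longlonglongrightarrow> blinfun_apply f x)"

definition kadets_klee :: "'a::real_normed_vector itself \<Rightarrow> bool" where
  "kadets_klee _ \<longleftrightarrow>
     (\<forall>(xs::nat \<Rightarrow> 'a) x. weak_conv xs x \<and> (\<lambda>n. norm (xs n)) \<longlonglongrightarrow> norm x
        \<longrightarrow> xs \<longlonglongrightarrow> x)"

definition norm_attain_set :: "('a::real_normed_vector \<Rightarrow>\<^sub>L 'b::real_normed_vector) \<Rightarrow> 'a set" where
  "norm_attain_set T = {x. norm x = 1 \<and> norm (blinfun_apply T x) = norm T}"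

definition extreme_contraction :: "('a::real_normed_vector \<Rightarrow>\<^sub>L 'b::real_normed_vector) \<Rightarrow> bool" where
  "extreme_contraction T \<longleftrightarrow> norm T = 1 \<and> T extreme_point_of (cball 0 1)"

definition rank_one :: "('a::real_normed_vector \<Rightarrow>\<^sub>L 'b::real_normed_vector) \<Rightarrow> bool" where
  "rank_one T \<longleftrightarrow> (\<exists>y. y \<noteq> 0 \<and> range (blinfun_apply T) = span {y})"

definition birkhoff_orth :: "'a::real_normed_vector \<Rightarrow> 'a \<Rightarrow> bool" where
  "birkhoff_orth x y \<longleftrightarrow> (\<forall>t::real. norm (x + t *\<^sub>R y) \<ge> norm x)"

definition orth_set :: "'a::real_normed_vector \<Rightarrow> 'a set" where
  "orth_set x = {y. birkhoff_orth x y}"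

definition CPP :: "'a::real_normed_vector \<Rightarrow> 'b::real_normed_vector \<Rightarrow> bool" where
  "CPP x y \<longleftrightarrow> norm x = 1 \<and> norm y = 1 \<and>
     (\<exists>r>0. \<exists>\<mu>>0. \<forall>z \<in> orth_set x \<inter> sphere 0 1. \<forall>w \<in> orth_set y \<inter> sphere 0 1.
        \<forall>a b::real. a *\<^sub>R x + b *\<^sub>R z \<in> ball x r \<inter> sphere 0 1
           \<longrightarrow> norm (a *\<^sub>R y + (b * \<mu>) *\<^sub>R w) \<le> 1)"

end

theory Submission
  imports Defs
begin

text \<open>Since \<open>T\<close> has rank one, \<open>T v = g v \<cdot> y\<close> with \<open>y = T x\<close> and a functional \<open>g\<close> of norm
  at most one whose only maximizer on the unit ball is \<open>x\<close>.  Reflexivity and the Kadets--Klee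
  property give a uniform gap: \<open>\<bar>g u\<bar> \<le> 1 - \<delta>\<close> on the unit sphere outside the
  \<open>r\<close>-balls around \<open>\<plusminus>x\<close>.  Pick a unit \<open>w\<close> Birkhoff--James orthogonal to \<open>y\<close> and a
  norm-one \<open>h\<close> with \<open>h x = 0\<close>, and put \<open>S v = \<epsilon> h v \<cdot> w\<close>.  Near \<open>\<plusminus>x\<close> the CPP
  inequality bounds \<open>(T \<plusminus> S) u\<close>, away from them the gap does; hence \<open>\<parallel>T \<plusminus> S\<parallel> \<le> 1\<close>
  and \<open>T\<close> is the midpoint of \<open>T - S\<close> and \<open>T + S\<close>.\<close>

section \<open>Weak compactness and the norm gap\<close>

lemma cluster_point_in_closed:
  assumes "inf (nhds a) F \<noteq> bot" "eventually (\<lambda>x. x \<in> C) F" "closed C"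
  shows "a \<in> C"
proof (rule ccontr)
  assume "a \<notin> C"
  then have "eventually (\<lambda>x. x \<in> - C) (nhds a)"
    using assms(3) by (intro eventually_nhds_in_open) (auto simp: open_Compl)
  with assms(2) have "eventually (\<lambda>_. False) (inf (nhds a) F)"
    unfolding eventually_inf by blast
  with assms(1) show False
    by (simp add: trivial_limit_def)
qed

lemma compact_PiE_cball_dual_norm:
  "compact (Pi\<^sub>E UNIV (\<lambda>k :: 'a::real_normed_vector \<Rightarrow>\<^sub>L real. cball (0::real) (norm k)))"
  using compactin_PiE[of "\<lambda>_. euclidean" UNIV "\<lambda>k :: 'a \<Rightarrow>\<^sub>L real. cball (0::real) (norm k)"]
  by (simp add: euclidean_product_topology compactin_euclidean_iff)

lemma closed_evaluation_condition:
  fixes C :: "real set"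
  assumes "closed C"
  shows "closed {\<psi> :: 'k \<Rightarrow> real. \<psi> k \<in> C}"
  using continuous_on_closed_vimage[of UNIV "\<lambda>\<psi> :: 'k \<Rightarrow> real. \<psi> k"] assms
  by (simp add: vimage_def)

lemma smooth_space_norming_functional:
  fixes u :: "'a::real_normed_vector"
  assumes "smooth_space TYPE('a)" and "u \<noteq> 0"
  obtains k :: "'a \<Rightarrow>\<^sub>L real" where "norm k = 1" "blinfun_apply k u = norm u"
proof -
  have "norm (u /\<^sub>R norm u) = 1"
    using assms(2) by simp
  then obtain k :: "'a \<Rightarrow>\<^sub>L real" where "norm k = 1" "blinfun_apply k (u /\<^sub>R norm u) = 1"
    using assms(1) unfolding smooth_space_def by blast
  with assms(2) show ?thesis
    by (intro that[of k]) (auto simp: blinfun.scaleR_right field_simps)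
qed

text \<open>By Tychonoff the evaluations \<open>k \<mapsto> k (v n)\<close> have a cluster point \<open>\<Phi>\<close> in
  \<open>\<Pi>\<^sub>k [-\<parallel>k\<parallel>, \<parallel>k\<parallel>]\<close>; closed conditions such as additivity pass to \<open>\<Phi>\<close>.\<close>
lemma evaluation_cluster_point:
  fixes v :: "'i \<Rightarrow> 'a::real_normed_vector" and F :: "'i filter"
  assumes F: "F \<noteq> bot" and v_le: "\<And>n. norm (v n) \<le> 1"
  obtains \<Phi> :: "('a \<Rightarrow>\<^sub>L real) \<Rightarrow> real"
  where "bounded_linear \<Phi>" "\<And>k. norm (\<Phi> k) \<le> norm k"
    and "\<And>k C. closed C \<Longrightarrow> eventually (\<lambda>n. blinfun_apply k (v n) \<in> C) F \<Longrightarrow> \<Phi> k \<in> C"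
proof -
  define ev where "ev n = (\<lambda>k :: 'a \<Rightarrow>\<^sub>L real. blinfun_apply k (v n))" for n
  have bounded: "\<bar>blinfun_apply k (v n)\<bar> \<le> norm k" for k :: "'a \<Rightarrow>\<^sub>L real" and n
    using norm_blinfun[of k "v n"] mult_left_mono[OF v_le[of n], of "norm k"] by simp
  have "filtermap ev F \<noteq> bot"
    using F by (simp add: filtermap_bot_iff)
  moreover have "eventually (\<lambda>\<psi>. \<psi> \<in> Pi\<^sub>E UNIV (\<lambda>k. cball 0 (norm k))) (filtermap ev F)"
    by (simp add: eventually_filtermap ev_def PiE_iff bounded)
  ultimately obtain \<Phi> where \<Phi>: "\<Phi> \<in> Pi\<^sub>E UNIV (\<lambda>k. cball 0 (norm k))"
    and cluster: "inf (nhds \<Phi>) (filtermap ev F) \<noteq> bot"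
    using compact_PiE_cball_dual_norm unfolding compact_filter by blast
  have closed_inherit: "\<Phi> \<in> C" if "closed C" "\<And>n. ev n \<in> C" for C
    using cluster_point_in_closed[OF cluster _ that(1)] that(2) by (simp add: eventually_filtermap)
  have eval_inherit: "\<Phi> k \<in> C" if "closed C" "eventually (\<lambda>n. blinfun_apply k (v n) \<in> C) F" for k C
    using cluster_point_in_closed[OF cluster _ closed_evaluation_condition[OF that(1), of k]] that(2)
    by (simp add: eventually_filtermap ev_def)
  note coordinate = continuous_on_product_coordinates
  have add: "\<Phi> (a + b) = \<Phi> a + \<Phi> b" for a b
    using closed_inherit[of "{\<psi>. \<psi> (a + b) = \<psi> a + \<psi> b}"]
      closed_Collect_eq[OF coordinate[where i = "a + b"]
        continuous_on_add[OF coordinate[where i = a] coordinate[where i = b]]]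
    by (simp add: ev_def blinfun.add_left)
  have scale: "\<Phi> (c *\<^sub>R a) = c *\<^sub>R \<Phi> a" for c a
    using closed_inherit[of "{\<psi>. \<psi> (c *\<^sub>R a) = c * \<psi> a}"]
      closed_Collect_eq[OF coordinate[where i = "c *\<^sub>R a"]
        continuous_on_mult[OF continuous_on_const[where c = c] coordinate[where i = a]]]
    by (simp add: ev_def blinfun.scaleR_left)
  have \<Phi>_le: "norm (\<Phi> k) \<le> norm k" for k
    using \<Phi> by (simp add: PiE_iff)
  have "bounded_linear \<Phi>"
    by (rule bounded_linear_intro[where K = 1]) (simp_all only: add scale \<Phi>_le mult_1_right)
  from this \<Phi>_le eval_inherit show ?thesis
    by (rule that)
qed

text \<open>The norming functionals supplied by smoothness stand in for Hahn--Banach in bounding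
  \<open>\<parallel>u\<parallel>\<close>.\<close>
lemma reflexive_weak_cluster_point:
  fixes v :: "'i \<Rightarrow> 'a::real_normed_vector" and F :: "'i filter"
  assumes refl: "reflexive_space TYPE('a)" and smooth: "smooth_space TYPE('a)"
    and F: "F \<noteq> bot" and v_le: "\<And>n. norm (v n) \<le> 1"
  obtains u where "norm u \<le> 1"
    and "\<And>(k :: 'a \<Rightarrow>\<^sub>L real) C. closed C \<Longrightarrow> eventually (\<lambda>n. blinfun_apply k (v n) \<in> C) F \<Longrightarrow>
           blinfun_apply k u \<in> C"
proof -
  obtain \<Phi> :: "('a \<Rightarrow>\<^sub>L real) \<Rightarrow> real" where "bounded_linear \<Phi>"
    and \<Phi>_le: "\<And>k. norm (\<Phi> k) \<le> norm k"
    and inherit: "\<And>k C. closed C \<Longrightarrow> eventually (\<lambda>n. blinfun_apply k (v n) \<in> C) F \<Longrightarrow> \<Phi> k \<in> C"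
    by (rule evaluation_cluster_point[where v = v, OF F v_le]) (rule that)
  moreover obtain u where "\<And>k. blinfun_apply (Blinfun \<Phi>) k = blinfun_apply k u"
    using refl unfolding reflexive_space_def by blast
  ultimately have u: "\<Phi> k = blinfun_apply k u" for k
    by (simp add: bounded_linear_Blinfun_apply)
  have "norm u \<le> 1"
  proof (cases "u = 0")
    case False
    then obtain k :: "'a \<Rightarrow>\<^sub>L real" where "norm k = 1" "blinfun_apply k u = norm u"
      using smooth_space_norming_functional[OF smooth] by blast
    with \<Phi>_le[of k] u[of k] show ?thesis by simp
  qed simp
  with inherit that show ?thesis
    by (simp add: u)
qed

lemma weak_conv_of_maximizing_sequence:
  fixes g :: "'a::real_normed_vector \<Rightarrow>\<^sub>L real" and v :: "nat \<Rightarrow> 'a"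
  assumes refl: "reflexive_space TYPE('a)" and smooth: "smooth_space TYPE('a)"
    and v_le: "\<And>n. norm (v n) \<le> 1" and gv: "(\<lambda>n. blinfun_apply g (v n)) \<longlonglongrightarrow> 1"
    and unique: "\<And>u. norm u \<le> 1 \<Longrightarrow> blinfun_apply g u = 1 \<Longrightarrow> u = x"
  shows "weak_conv v x"
  unfolding weak_conv_def
proof
  fix h :: "'a \<Rightarrow>\<^sub>L real"
  show "(\<lambda>n. blinfun_apply h (v n)) \<longlonglongrightarrow> blinfun_apply h x"
  proof (rule ccontr)
    assume "\<not> ?thesis"
    then obtain e :: real where e: "e > 0" and
      frequently_far: "\<not> eventually (\<lambda>n. dist (blinfun_apply h (v n)) (blinfun_apply h x) < e) sequentially"
      unfolding tendsto_iff by blast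
    define A where "A = {n. e \<le> \<bar>blinfun_apply h (v n) - blinfun_apply h x\<bar>}"
    define F where "F = inf sequentially (principal A)"
    have "\<not> eventually (\<lambda>n. n \<notin> A) sequentially"
      using frequently_far by (simp add: A_def dist_real_def not_le)
    then have "F \<noteq> bot"
      by (simp add: F_def trivial_limit_def eventually_inf_principal)
    obtain u where u_le: "norm u \<le> 1" and inherit: "\<And>(k :: 'a \<Rightarrow>\<^sub>L real) C. closed C \<Longrightarrow>
        eventually (\<lambda>n. blinfun_apply k (v n) \<in> C) F \<Longrightarrow> blinfun_apply k u \<in> C"
      by (rule reflexive_weak_cluster_point[where v = v, OF refl smooth \<open>F \<noteq> bot\<close> v_le]) (rule that)
    have "dist (blinfun_apply g u) 1 \<le> 0 + \<eta>" if "\<eta> > 0" for \<eta>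
    proof -
      have "eventually (\<lambda>n. dist (blinfun_apply g (v n)) 1 < \<eta>) sequentially"
        using gv that by (rule tendstoD)
      then have "eventually (\<lambda>n. blinfun_apply g (v n) \<in> cball 1 \<eta>) sequentially"
        by (rule eventually_mono) (simp add: dist_commute)
      then have "eventually (\<lambda>n. blinfun_apply g (v n) \<in> cball 1 \<eta>) F"
        unfolding F_def by (rule filter_leD[rotated]) simp
      from inherit[OF closed_cball this] show ?thesis
        by (simp add: dist_commute)
    qed
    then have "blinfun_apply g u = 1"
      using field_le_epsilon[of "dist (blinfun_apply g u) 1" 0] by simp
    with u_le have "u = x"
      by (rule unique)
    have far_closed: "closed {t. e \<le> \<bar>t - blinfun_apply h x\<bar>}"
      by (intro closed_Collect_le continuous_on_const continuous_on_rabs continuous_on_diff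
          continuous_on_id)
    have "eventually (\<lambda>n. blinfun_apply h (v n) \<in> {t. e \<le> \<bar>t - blinfun_apply h x\<bar>}) F"
      by (simp add: F_def A_def eventually_inf_principal)
    from inherit[OF far_closed this] have "e \<le> \<bar>blinfun_apply h u - blinfun_apply h x\<bar>"
      by simp
    with \<open>u = x\<close> e show False
      by simp
  qed
qed

lemma maximizing_sequence_tendsto:
  fixes g :: "'a::real_normed_vector \<Rightarrow>\<^sub>L real" and v :: "nat \<Rightarrow> 'a"
  assumes refl: "reflexive_space TYPE('a)" and smooth: "smooth_space TYPE('a)"
    and kk: "kadets_klee TYPE('a)" and x: "norm x = 1"
    and unique: "\<And>u. norm u \<le> 1 \<Longrightarrow> blinfun_apply g u = 1 \<Longrightarrow> u = x"
    and v_norm: "\<And>n. norm (v n) = 1" and gv: "(\<lambda>n. blinfun_apply g (v n)) \<longlonglongrightarrow> 1"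
  shows "v \<longlonglongrightarrow> x"
proof -
  have "weak_conv v x"
    by (rule weak_conv_of_maximizing_sequence[OF refl smooth _ gv unique]) (simp add: v_norm)
  moreover have "(\<lambda>n. norm (v n)) \<longlonglongrightarrow> norm x"
    using v_norm x by simp
  ultimately show ?thesis
    using kk unfolding kadets_klee_def by blast
qed

lemma uniform_gap_away_from_maximizers:
  fixes g :: "'a::real_normed_vector \<Rightarrow>\<^sub>L real"
  assumes refl: "reflexive_space TYPE('a)" and smooth: "smooth_space TYPE('a)"
    and kk: "kadets_klee TYPE('a)" and r: "r > 0" and g: "norm g \<le> 1" and x: "norm x = 1"
    and unique: "\<And>u. norm u \<le> 1 \<Longrightarrow> blinfun_apply g u = 1 \<Longrightarrow> u = x"
  obtains \<delta> where "\<delta> > 0"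
    and "\<And>u. norm u = 1 \<Longrightarrow> r \<le> norm (u - x) \<Longrightarrow> r \<le> norm (u + x) \<Longrightarrow>
           \<bar>blinfun_apply g u\<bar> \<le> 1 - \<delta>"
proof (rule ccontr)
  assume no_gap: "\<not> thesis"
  have "\<exists>u. norm u = 1 \<and> r \<le> norm (u - x) \<and> r \<le> norm (u + x)
      \<and> 1 - inverse (real (Suc n)) < \<bar>blinfun_apply g u\<bar>" for n
  proof (rule ccontr)
    assume "\<not> ?thesis"
    then have "\<bar>blinfun_apply g u\<bar> \<le> 1 - inverse (real (Suc n))"
      if "norm u = 1" "r \<le> norm (u - x)" "r \<le> norm (u + x)" for u
      using that by (meson not_le)
    with that[of "inverse (real (Suc n))"] no_gap show False
      by simp
  qed
  then obtain w where w: "\<And>n. norm (w n) = 1" "\<And>n. r \<le> norm (w n - x)" "\<And>n. r \<le> norm (w n + x)"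
      "\<And>n. 1 - inverse (real (Suc n)) < \<bar>blinfun_apply g (w n)\<bar>"
    by metis
  define v where "v n = (if blinfun_apply g (w n) \<ge> 0 then w n else - w n)" for n
  have v_norm: "norm (v n) = 1" for n
    using w(1)[of n] by (simp add: v_def)
  have v_far: "r \<le> norm (v n - x)" for n
    using w(2)[of n] w(3)[of n] by (simp add: v_def norm_minus_commute[of "- w n" x] add.commute)
  have gv_abs: "blinfun_apply g (v n) = \<bar>blinfun_apply g (w n)\<bar>" for n
    by (simp add: v_def blinfun.minus_right)
  have gv_le: "blinfun_apply g (v n) \<le> 1" for n
    using norm_blinfun[of g "v n"] g v_norm[of n] by (simp add: mult_left_le_one_le)
  have "(\<lambda>n. blinfun_apply g (v n)) \<longlonglongrightarrow> 1"
  proof (rule tendsto_sandwich[of "\<lambda>n. 1 - inverse (real (Suc n))" _ _ "\<lambda>n. 1"])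
    show "\<forall>\<^sub>F n in sequentially. 1 - inverse (real (Suc n)) \<le> blinfun_apply g (v n)"
      using w(4) gv_abs by (simp add: less_imp_le)
    show "(\<lambda>n. 1 - inverse (real (Suc n))) \<longlonglongrightarrow> 1"
      using tendsto_diff[OF tendsto_const[of "1::real"] LIMSEQ_inverse_real_of_nat] by simp
  qed (simp_all add: gv_le)
  with v_norm have "v \<longlonglongrightarrow> x"
    by (intro maximizing_sequence_tendsto[OF refl smooth kk x unique])
  then obtain N where "norm (v N - x) < r"
    using LIMSEQ_D[OF _ r] by blast
  with v_far[of N] show False
    by simp
qed

section \<open>Birkhoff--James orthogonality and auxiliary functionals\<close>

lemma exists_not_in_span_singleton:
  fixes y :: "'a::real_vector"
  assumes "dim_gt_one TYPE('a)"
  obtains v where "v \<notin> span {y}"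
proof (rule ccontr)
  assume "\<not> thesis"
  then have "UNIV \<subseteq> span {y}"
    using that by blast
  moreover obtain u1 u2 :: 'a where "u1 \<noteq> u2" and "independent {u1, u2}"
    using assms unfolding dim_gt_one_def by blast
  ultimately have "card {u1, u2} \<le> card {y}"
    using independent_span_bound[of "{y}" "{u1, u2}"] by auto
  with \<open>u1 \<noteq> u2\<close> show False
    by simp
qed

lemma birkhoff_orth_if_kernel:
  fixes f :: "'a::real_normed_vector \<Rightarrow>\<^sub>L real"
  assumes "norm f \<le> 1" "blinfun_apply f y = norm y" "blinfun_apply f d = 0"
  shows "birkhoff_orth y d"
  unfolding birkhoff_orth_def
proof
  fix t :: real
  have "blinfun_apply f (y + t *\<^sub>R d) \<le> norm f * norm (y + t *\<^sub>R d)"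
    using norm_blinfun[of f "y + t *\<^sub>R d"] by simp
  also have "\<dots> \<le> norm (y + t *\<^sub>R d)"
    using assms(1) by (simp add: mult_left_le_one_le)
  finally show "norm y \<le> norm (y + t *\<^sub>R d)"
    using assms by (simp add: blinfun.add_right blinfun.scaleR_right)
qed

lemma birkhoff_orth_minus_right: "birkhoff_orth x (- y) \<longleftrightarrow> birkhoff_orth x y"
proof -
  have "x + t *\<^sub>R (- y) = x + (- t) *\<^sub>R y" for t :: real
    by simp
  then show ?thesis
    unfolding birkhoff_orth_def by (metis minus_minus)
qed

lemma exists_unit_birkhoff_orth:
  fixes y :: "'a::real_normed_vector"
  assumes smooth: "smooth_space TYPE('a)" and dim: "dim_gt_one TYPE('a)" and y: "norm y = 1"
  obtains w where "norm w = 1" "birkhoff_orth y w"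
proof -
  obtain \<psi> :: "'a \<Rightarrow>\<^sub>L real" where \<psi>: "norm \<psi> = 1" "blinfun_apply \<psi> y = 1"
    using smooth y unfolding smooth_space_def by blast
  obtain v where v: "v \<notin> span {y}"
    using exists_not_in_span_singleton[OF dim] by blast
  define d where "d = v - blinfun_apply \<psi> v *\<^sub>R y"
  have "d \<noteq> 0"
  proof
    assume "d = 0"
    then have "v = blinfun_apply \<psi> v *\<^sub>R y"
      by (simp add: d_def)
    then have "v \<in> span {y}"
      by (metis span_base span_scale singletonI)
    with v show False ..
  qed
  moreover have "blinfun_apply \<psi> d = 0"
    using \<psi>(2) by (simp add: d_def blinfun.diff_right blinfun.scaleR_right)
  ultimately show ?thesis
    using birkhoff_orth_if_kernel[of \<psi> y "d /\<^sub>R norm d"] \<psi> y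
    by (intro that[of "d /\<^sub>R norm d"]) (auto simp: blinfun.scaleR_right)
qed

lemma abs_maximizer_in_span:
  fixes g :: "'a::real_normed_vector \<Rightarrow>\<^sub>L real"
  assumes unique: "\<And>u. norm u \<le> 1 \<Longrightarrow> blinfun_apply g u = 1 \<Longrightarrow> u = x"
    and "norm u = 1" "\<bar>blinfun_apply g u\<bar> = 1"
  shows "u \<in> span {x}"
proof -
  have "blinfun_apply g u = 1 \<or> blinfun_apply g (- u) = 1"
    using assms(3) by (auto simp: blinfun.minus_right abs_if split: if_splits)
  then have "u = x \<or> - u = x"
    using unique assms(2) by auto
  then show ?thesis
    by (metis minus_minus singletonI span_base span_neg)
qed

text \<open>Take \<open>h = k - k x \<cdot> g\<close> for a norming functional \<open>k\<close> of some \<open>v \<notin> span {x}\<close>;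
  if \<open>h = 0\<close>, then \<open>g\<close> would attain its norm at \<open>v / \<parallel>v\<parallel>\<close>, forcing \<open>v \<in> span {x}\<close>.\<close>
lemma exists_functional_vanishing_at:
  fixes g :: "'a::real_normed_vector \<Rightarrow>\<^sub>L real"
  assumes smooth: "smooth_space TYPE('a)" and dim: "dim_gt_one TYPE('a)"
    and g: "norm g \<le> 1" and x: "norm x = 1" "blinfun_apply g x = 1"
    and unique: "\<And>u. norm u \<le> 1 \<Longrightarrow> blinfun_apply g u = 1 \<Longrightarrow> u = x"
  obtains h :: "'a \<Rightarrow>\<^sub>L real" where "norm h = 1" "blinfun_apply h x = 0"
proof -
  have g_le: "\<bar>blinfun_apply g u\<bar> \<le> norm u" for u
    using norm_blinfun[of g u] mult_right_mono[OF g, of "norm u"] by simp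
  obtain v where v: "v \<notin> span {x}"
    using exists_not_in_span_singleton[OF dim] by blast
  then have "v \<noteq> 0"
    using span_zero by blast
  then obtain k :: "'a \<Rightarrow>\<^sub>L real" where k: "norm k = 1" "blinfun_apply k v = norm v"
    using smooth_space_norming_functional[OF smooth] by blast
  define h where "h = k - blinfun_apply k x *\<^sub>R g"
  have hx: "blinfun_apply h x = 0"
    using x(2) by (simp add: h_def blinfun.diff_left scaleR_blinfun.rep_eq)
  have "h \<noteq> 0"
  proof
    assume "h = 0"
    have k_eq: "blinfun_apply k u = blinfun_apply k x * blinfun_apply g u" for u
    proof -
      have "blinfun_apply h u = 0"
        using \<open>h = 0\<close> by simp
      then show ?thesis
        by (simp add: h_def blinfun.diff_left scaleR_blinfun.rep_eq)
    qed
    define u where "u = v /\<^sub>R norm v"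
    have u: "norm u = 1" "v = norm v *\<^sub>R u"
      using \<open>v \<noteq> 0\<close> by (simp_all add: u_def)
    have "\<bar>blinfun_apply k x\<bar> \<le> 1"
      using norm_blinfun[of k x] k(1) x(1) by simp
    moreover have "blinfun_apply k u = 1"
      using k(2) \<open>v \<noteq> 0\<close> by (simp add: u_def blinfun.scaleR_right)
    then have "1 = \<bar>blinfun_apply k x\<bar> * \<bar>blinfun_apply g u\<bar>"
      using k_eq[of u] by (metis abs_mult abs_one)
    moreover have "\<bar>blinfun_apply g u\<bar> \<le> 1"
      using g_le[of u] u(1) by simp
    ultimately have "\<bar>blinfun_apply g u\<bar> = 1"
      by (metis abs_ge_zero antisym mult_left_le_one_le)
    then have "u \<in> span {x}"
      using abs_maximizer_in_span[of g x u] unique u(1) by blast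
    then have "v \<in> span {x}"
      by (subst u(2)) (rule span_scale)
    with v show False ..
  qed
  with hx show ?thesis
    by (intro that[of "h /\<^sub>R norm h"]) (simp_all add: scaleR_blinfun.rep_eq)
qed

section \<open>Rank-one operators and their perturbations\<close>

lemma rank_one_factor:
  fixes T :: "'a::real_normed_vector \<Rightarrow>\<^sub>L 'b::real_normed_vector"
  assumes smooth: "smooth_space TYPE('b)" and "rank_one T" and Tx: "norm (blinfun_apply T x) = 1"
  obtains g :: "'a \<Rightarrow>\<^sub>L real" where "\<And>v. blinfun_apply T v = blinfun_apply g v *\<^sub>R blinfun_apply T x"
proof -
  obtain \<psi> :: "'b \<Rightarrow>\<^sub>L real" where \<psi>: "blinfun_apply \<psi> (blinfun_apply T x) = 1"
    using smooth Tx unfolding smooth_space_def by blast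
  obtain y0 where "range (blinfun_apply T) = span {y0}"
    using \<open>rank_one T\<close> unfolding rank_one_def by blast
  then have in_span: "\<exists>c. blinfun_apply T v = c *\<^sub>R y0" for v
    using rangeI[of "blinfun_apply T" v] by (auto simp: span_singleton)
  obtain c0 where c0: "blinfun_apply T x = c0 *\<^sub>R y0"
    using in_span by blast
  with Tx have "c0 \<noteq> 0"
    by auto
  show ?thesis
  proof (rule that[of "\<psi> o\<^sub>L T"])
    fix v
    obtain c where "blinfun_apply T v = c *\<^sub>R y0"
      using in_span by blast
    with c0 \<open>c0 \<noteq> 0\<close> have Tv: "blinfun_apply T v = (c / c0) *\<^sub>R blinfun_apply T x"
      by simp
    then have "blinfun_apply (\<psi> o\<^sub>L T) v = c / c0"
      using \<psi> by (simp add: blinfun.scaleR_right)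
    with Tv show "blinfun_apply T v = blinfun_apply (\<psi> o\<^sub>L T) v *\<^sub>R blinfun_apply T x"
      by simp
  qed
qed

lemma rank_one_norm_attaining_factor:
  fixes T :: "'a::real_normed_vector \<Rightarrow>\<^sub>L 'b::real_normed_vector"
  assumes smooth: "smooth_space TYPE('b)" and rank: "rank_one T" and nT: "norm T = 1"
    and MT: "norm_attain_set T = {x, -x}"
  obtains g :: "'a \<Rightarrow>\<^sub>L real"
  where "\<And>v. blinfun_apply T v = blinfun_apply g v *\<^sub>R blinfun_apply T x"
    and "norm x = 1" "norm (blinfun_apply T x) = 1" "norm g \<le> 1" "blinfun_apply g x = 1"
    and "\<And>u. norm u \<le> 1 \<Longrightarrow> blinfun_apply g u = 1 \<Longrightarrow> u = x"
proof -
  have attain: "norm u = 1 \<and> norm (blinfun_apply T u) = 1 \<longleftrightarrow> u = x \<or> u = -x" for u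
    using MT nT by (auto simp: norm_attain_set_def set_eq_iff)
  then have x: "norm x = 1" and Tx: "norm (blinfun_apply T x) = 1"
    by auto
  obtain g where Tg: "\<And>v. blinfun_apply T v = blinfun_apply g v *\<^sub>R blinfun_apply T x"
    using rank_one_factor[OF smooth rank Tx] by blast
  have T_le: "norm (blinfun_apply T v) \<le> norm v" for v
    using norm_blinfun[of T v] nT by simp
  have abs_g: "\<bar>blinfun_apply g v\<bar> = norm (blinfun_apply T v)" for v
    using Tx by (simp add: Tg[of v])
  have g_le: "norm g \<le> 1"
    by (rule norm_blinfun_bound) (simp_all add: abs_g T_le)
  have gx: "blinfun_apply g x = 1"
  proof -
    have "(blinfun_apply g x - 1) *\<^sub>R blinfun_apply T x = 0"
      using Tg[of x] by (simp add: scaleR_diff_left)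
    with Tx show ?thesis
      by auto
  qed
  have unique: "u = x" if "norm u \<le> 1" "blinfun_apply g u = 1" for u
  proof -
    have "norm (blinfun_apply T u) = 1"
      using abs_g[of u] that(2) by simp
    moreover have "norm u = 1"
      using that(1) T_le[of u] \<open>norm (blinfun_apply T u) = 1\<close> by linarith
    ultimately have "u = x \<or> u = -x"
      using attain by blast
    moreover have "blinfun_apply g (- x) \<noteq> 1"
      using gx by (simp add: blinfun.minus_right)
    ultimately show "u = x"
      using that(2) by blast
  qed
  show ?thesis
    by (rule that[OF Tg x Tx g_le gx unique])
qed

definition cpp_with :: "'a::real_normed_vector \<Rightarrow> 'b::real_normed_vector \<Rightarrow> real \<Rightarrow> real \<Rightarrow> bool" where
  "cpp_with x y r \<mu> \<longleftrightarrow>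
     (\<forall>z \<in> orth_set x \<inter> sphere 0 1. \<forall>w \<in> orth_set y \<inter> sphere 0 1.
        \<forall>a b::real. a *\<^sub>R x + b *\<^sub>R z \<in> ball x r \<inter> sphere 0 1
           \<longrightarrow> norm (a *\<^sub>R y + (b * \<mu>) *\<^sub>R w) \<le> 1)"

lemma CPP_iff_cpp_with:
  "CPP x y \<longleftrightarrow> norm x = 1 \<and> norm y = 1 \<and> (\<exists>r>0. \<exists>\<mu>>0. cpp_with x y r \<mu>)"
  by (simp add: CPP_def cpp_with_def)

lemma norm_add_scaleR_le_one:
  fixes p q :: "'a::real_normed_vector"
  assumes "norm (p + q) \<le> 1" "norm (p - q) \<le> 1" "\<bar>t\<bar> \<le> 1"
  shows "norm (p + t *\<^sub>R q) \<le> 1"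
proof -
  have "((1 + t) / 2) *\<^sub>R (p + q) + ((1 - t) / 2) *\<^sub>R (p - q)
      = ((1 + t) / 2 + (1 - t) / 2) *\<^sub>R p + ((1 + t) / 2 - (1 - t) / 2) *\<^sub>R q"
    by (simp add: algebra_simps)
  then have "p + t *\<^sub>R q = ((1 + t) / 2) *\<^sub>R (p + q) + ((1 - t) / 2) *\<^sub>R (p - q)"
    by (simp add: field_simps)
  then have "norm (p + t *\<^sub>R q) \<le> ((1 + t) / 2) * norm (p + q) + ((1 - t) / 2) * norm (p - q)"
    using assms(3) norm_triangle_ineq[of "((1 + t) / 2) *\<^sub>R (p + q)" "((1 - t) / 2) *\<^sub>R (p - q)"]
    by simp
  also have "\<dots> \<le> ((1 + t) / 2) * 1 + ((1 - t) / 2) * 1"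
    using assms by (intro add_mono mult_left_mono) auto
  also have "\<dots> = 1"
    by (simp add: field_simps)
  finally show ?thesis .
qed

lemma abs_mult_blinfun_le:
  fixes h :: "'a::real_normed_vector \<Rightarrow>\<^sub>L real"
  assumes "norm h \<le> 1" "norm z \<le> 1" "\<bar>c\<bar> \<le> m"
  shows "\<bar>c * blinfun_apply h z\<bar> \<le> m"
proof -
  have "\<bar>blinfun_apply h z\<bar> \<le> 1"
    using norm_blinfun[of h z] mult_mono[OF assms(1,2)] by simp
  then have "\<bar>c\<bar> * \<bar>blinfun_apply h z\<bar> \<le> m * 1"
    using assms(3) by (intro mult_mono) auto
  then show ?thesis
    by (simp add: abs_mult)
qed

text \<open>Near \<open>x\<close>, write \<open>u = g u \<cdot> x + b z\<close> with \<open>z\<close> a unit vector of \<open>ker g\<close>, which is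
  Birkhoff--James orthogonal to \<open>x\<close>; the CPP inequality for \<open>\<plusminus>w\<close> and convexity then bound
  the image of \<open>u\<close> under every perturbation of size at most \<open>\<mu>\<close>.\<close>
lemma norm_perturbation_le_one_near:
  fixes g h :: "'a::real_normed_vector \<Rightarrow>\<^sub>L real" and y w :: "'b::real_normed_vector"
  assumes cpp: "cpp_with x y r \<mu>" and \<mu>: "\<mu> > 0" and x: "norm x = 1" and y: "norm y = 1"
    and g: "norm g \<le> 1" "blinfun_apply g x = 1" and h: "norm h \<le> 1" "blinfun_apply h x = 0"
    and w: "norm w = 1" "birkhoff_orth y w"
    and u: "norm u = 1" "norm (u - x) < r" and c: "\<bar>c\<bar> \<le> \<mu>"
  shows "norm (blinfun_apply g u *\<^sub>R y + (c * blinfun_apply h u) *\<^sub>R w) \<le> 1"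
proof -
  define a where "a = blinfun_apply g u"
  define d where "d = u - a *\<^sub>R x"
  have gd: "blinfun_apply g d = 0" and hd: "blinfun_apply h d = blinfun_apply h u"
    using g(2) h(2) by (simp_all add: d_def a_def blinfun.diff_right blinfun.scaleR_right)
  show ?thesis
  proof (cases "d = 0")
    case True
    then have "blinfun_apply h u = 0"
      using hd by simp
    then show ?thesis
      using norm_blinfun[of g u] g(1) u(1) y by (simp add: a_def mult_left_le_one_le)
  next
    case False
    define b where "b = norm d"
    define z where "z = d /\<^sub>R b"
    have b: "b > 0"
      using False by (simp add: b_def)
    have z: "z \<in> orth_set x \<inter> sphere 0 1"
      using birkhoff_orth_if_kernel[OF g(1), of x z] g(2) x gd b
      by (simp add: orth_set_def z_def b_def blinfun.scaleR_right)
    have "a *\<^sub>R x + b *\<^sub>R z \<in> ball x r \<inter> sphere 0 1"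
      using b u by (simp add: z_def d_def dist_norm norm_minus_commute)
    moreover have "w \<in> orth_set y \<inter> sphere 0 1" "- w \<in> orth_set y \<inter> sphere 0 1"
      using w by (simp_all add: orth_set_def birkhoff_orth_minus_right)
    ultimately have "norm (a *\<^sub>R y + (b * \<mu>) *\<^sub>R w) \<le> 1"
      and "norm (a *\<^sub>R y - (b * \<mu>) *\<^sub>R w) \<le> 1"
      using cpp z unfolding cpp_with_def by (force, force)
    moreover have "\<bar>c * blinfun_apply h z\<bar> \<le> \<mu>"
      using abs_mult_blinfun_le[OF h(1) _ c] z by simp
    then have "\<bar>c * blinfun_apply h z / \<mu>\<bar> \<le> 1"
      using \<mu> by simp
    ultimately have "norm (a *\<^sub>R y + (c * blinfun_apply h z / \<mu>) *\<^sub>R ((b * \<mu>) *\<^sub>R w)) \<le> 1"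
      by (rule norm_add_scaleR_le_one)
    moreover have "blinfun_apply h u = blinfun_apply h z * b"
      using hd b by (simp add: z_def blinfun.scaleR_right)
    ultimately show ?thesis
      using \<mu> by (simp add: a_def)
  qed
qed

lemma norm_perturbation_le_one_sphere:
  fixes g h :: "'a::real_normed_vector \<Rightarrow>\<^sub>L real" and y w :: "'b::real_normed_vector"
  assumes cpp: "cpp_with x y r \<mu>" and \<mu>: "\<mu> > 0" and x: "norm x = 1" and y: "norm y = 1"
    and g: "norm g \<le> 1" "blinfun_apply g x = 1" and h: "norm h \<le> 1" "blinfun_apply h x = 0"
    and w: "norm w = 1" "birkhoff_orth y w"
    and gap: "\<And>u. norm u = 1 \<Longrightarrow> r \<le> norm (u - x) \<Longrightarrow> r \<le> norm (u + x) \<Longrightarrow>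
                \<bar>blinfun_apply g u\<bar> \<le> 1 - \<delta>"
    and u: "norm u = 1" and c: "\<bar>c\<bar> \<le> \<mu>" "\<bar>c\<bar> \<le> \<delta>"
  shows "norm (blinfun_apply g u *\<^sub>R y + (c * blinfun_apply h u) *\<^sub>R w) \<le> 1"
proof -
  note near = norm_perturbation_le_one_near[OF cpp \<mu> x y g h w _ _ c(1)]
  have "norm (- u - x) = norm (u + x)"
    using norm_minus_cancel[of "u + x"] by (simp add: algebra_simps)
  then consider "norm (u - x) < r" | "norm (- u - x) < r" | "r \<le> norm (u - x)" "r \<le> norm (u + x)"
    by linarith
  then show ?thesis
  proof cases
    case 1
    with near u show ?thesis .
  next
    case 2
    with near[of "- u"] u show ?thesis
      by (simp add: blinfun.minus_right flip: norm_minus_cancel[of "_ + _"])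
  next
    case 3
    have "\<bar>c * blinfun_apply h u\<bar> \<le> \<delta>"
      using abs_mult_blinfun_le[OF h(1) _ c(2)] u by simp
    moreover have "norm (blinfun_apply g u *\<^sub>R y + (c * blinfun_apply h u) *\<^sub>R w)
        \<le> \<bar>blinfun_apply g u\<bar> + \<bar>c * blinfun_apply h u\<bar>"
      using norm_triangle_ineq[of "blinfun_apply g u *\<^sub>R y" "(c * blinfun_apply h u) *\<^sub>R w"] y w(1)
      by simp
    ultimately show ?thesis
      using gap[OF u 3] by linarith
  qed
qed

lemma norm_blinfun_le_one_if_sphere:
  fixes L :: "'a::real_normed_vector \<Rightarrow>\<^sub>L 'b::real_normed_vector"
  assumes "\<And>u. norm u = 1 \<Longrightarrow> norm (blinfun_apply L u) \<le> 1"
  shows "norm L \<le> 1"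
proof (rule norm_blinfun_bound)
  fix v
  show "norm (blinfun_apply L v) \<le> 1 * norm v"
  proof (cases "v = 0")
    case False
    then have "norm (blinfun_apply L v) = norm v * norm (blinfun_apply L (v /\<^sub>R norm v))"
      by (simp add: blinfun.scaleR_right)
    also have "\<dots> \<le> norm v * 1"
      using assms[of "v /\<^sub>R norm v"] False by (intro mult_left_mono) simp_all
    finally show ?thesis
      by simp
  qed simp
qed simp

lemma not_extreme_point_of_cball_if_perturbation:
  fixes T S :: "'a::real_normed_vector"
  assumes "S \<noteq> 0" "norm (T + S) \<le> 1" "norm (T - S) \<le> 1"
  shows "\<not> T extreme_point_of cball 0 1"
proof -
  have "T - S \<noteq> T + S"
  proof
    assume "T - S = T + S"
    then have "2 *\<^sub>R S = 0"
      by (simp add: scaleR_2 algebra_simps)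
    with assms(1) show False
      by simp
  qed
  then have "midpoint (T - S) (T + S) \<in> open_segment (T - S) (T + S)"
    using midpoint_in_open_segment by blast
  moreover have "midpoint (T - S) (T + S) = T"
    by (simp add: midpoint_def scaleR_add_right[symmetric])
  ultimately have "T \<in> open_segment (T - S) (T + S)"
    by simp
  moreover have "T - S \<in> cball 0 1" "T + S \<in> cball 0 1"
    using assms(2,3) by simp_all
  ultimately show ?thesis
    unfolding extreme_point_of_def by blast
qed

lemma norm_rank_one_perturbation_le_one:
  fixes T :: "'a::real_normed_vector \<Rightarrow>\<^sub>L 'b::real_normed_vector" and g h :: "'a \<Rightarrow>\<^sub>L real"
  assumes Tg: "\<And>v. blinfun_apply T v = blinfun_apply g v *\<^sub>R y"
    and cpp: "cpp_with x y r \<mu>" and \<mu>: "\<mu> > 0" and x: "norm x = 1" and y: "norm y = 1"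
    and g: "norm g \<le> 1" "blinfun_apply g x = 1" and h: "norm h \<le> 1" "blinfun_apply h x = 0"
    and w: "norm w = 1" "birkhoff_orth y w"
    and gap: "\<And>u. norm u = 1 \<Longrightarrow> r \<le> norm (u - x) \<Longrightarrow> r \<le> norm (u + x) \<Longrightarrow>
                \<bar>blinfun_apply g u\<bar> \<le> 1 - \<delta>"
    and \<epsilon>: "0 \<le> \<epsilon>" "\<epsilon> \<le> \<mu>" "\<epsilon> \<le> \<delta>" and c: "\<bar>c\<bar> \<le> 1"
  shows "norm (T + c *\<^sub>R (blinfun_scaleR_left w o\<^sub>L (\<epsilon> *\<^sub>R h))) \<le> 1"
proof (rule norm_blinfun_le_one_if_sphere)
  fix u :: 'a assume "norm u = 1"
  have "\<bar>c\<bar> * \<epsilon> \<le> 1 * \<epsilon>"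
    using c \<epsilon>(1) by (rule mult_right_mono)
  then have "\<bar>c * \<epsilon>\<bar> \<le> \<epsilon>"
    using \<epsilon>(1) by (simp add: abs_mult)
  with \<epsilon> have "\<bar>c * \<epsilon>\<bar> \<le> \<mu>" "\<bar>c * \<epsilon>\<bar> \<le> \<delta>"
    by linarith+
  moreover have "blinfun_apply (T + c *\<^sub>R (blinfun_scaleR_left w o\<^sub>L (\<epsilon> *\<^sub>R h))) u
      = blinfun_apply g u *\<^sub>R y + (c * \<epsilon> * blinfun_apply h u) *\<^sub>R w"
    by (simp add: Tg[of u] blinfun.add_left scaleR_blinfun.rep_eq)
  ultimately show "norm (blinfun_apply (T + c *\<^sub>R (blinfun_scaleR_left w o\<^sub>L (\<epsilon> *\<^sub>R h))) u) \<le> 1"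
    using norm_perturbation_le_one_sphere[OF cpp \<mu> x y g h w gap \<open>norm u = 1\<close>]
    by simp
qed

lemma blinfun_scaleR_left_compose_ne_zero:
  fixes w :: "'b::real_normed_vector" and h :: "'a::real_normed_vector \<Rightarrow>\<^sub>L real"
  assumes "w \<noteq> 0" "h \<noteq> 0"
  shows "blinfun_scaleR_left w o\<^sub>L h \<noteq> 0"
proof -
  obtain v where "blinfun_apply h v \<noteq> 0"
    using assms(2) by (metis blinfun_eqI zero_blinfun.rep_eq)
  with assms(1) have "blinfun_apply (blinfun_scaleR_left w o\<^sub>L h) v \<noteq> 0"
    by simp
  then show ?thesis
    by (metis zero_blinfun.rep_eq)
qed

theorem mainTheorem7:
  fixes T :: "'a::banach \<Rightarrow>\<^sub>L 'b::banach" and x :: 'a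
  assumes "dim_gt_one TYPE('a)" and "dim_gt_one TYPE('b)"
    and "smooth_space TYPE('a)" and "reflexive_space TYPE('a)" and "kadets_klee TYPE('a)"
    and "smooth_space TYPE('b)"
    and "rank_one T" and "norm T = 1"
    and "norm_attain_set T = {x, -x}"
    and "CPP x (blinfun_apply T x)"
  shows "\<not> extreme_contraction T"
proof
  assume "extreme_contraction T"
  obtain g where Tg: "\<And>v. blinfun_apply T v = blinfun_apply g v *\<^sub>R blinfun_apply T x"
    and x: "norm x = 1" and y: "norm (blinfun_apply T x) = 1"
    and g: "norm g \<le> 1" "blinfun_apply g x = 1"
    and unique: "\<And>u. norm u \<le> 1 \<Longrightarrow> blinfun_apply g u = 1 \<Longrightarrow> u = x"
    using rank_one_norm_attaining_factor[OF assms(6-9)] by blast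
  obtain r \<mu> where r: "r > 0" and \<mu>: "\<mu> > 0" and cpp: "cpp_with x (blinfun_apply T x) r \<mu>"
    using assms(10) by (auto simp: CPP_iff_cpp_with)
  obtain \<delta> where \<delta>: "\<delta> > 0" and gap: "\<And>u. norm u = 1 \<Longrightarrow> r \<le> norm (u - x) \<Longrightarrow>
      r \<le> norm (u + x) \<Longrightarrow> \<bar>blinfun_apply g u\<bar> \<le> 1 - \<delta>"
    using uniform_gap_away_from_maximizers[OF assms(4,3,5) r g(1) x unique] by blast
  obtain w where w: "norm w = 1" "birkhoff_orth (blinfun_apply T x) w"
    by (rule exists_unit_birkhoff_orth[OF assms(6,2) y])
  obtain h :: "'a \<Rightarrow>\<^sub>L real" where h: "norm h = 1" "blinfun_apply h x = 0"
    by (rule exists_functional_vanishing_at[OF assms(3,1) g(1) x g(2) unique])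
  define S where "S = blinfun_scaleR_left w o\<^sub>L (min \<mu> \<delta> *\<^sub>R h)"
  have perturbed_le: "norm (T + c *\<^sub>R S) \<le> 1" if "\<bar>c\<bar> \<le> 1" for c
    unfolding S_def using \<mu> \<delta> h(1)
    by (intro norm_rank_one_perturbation_le_one[OF Tg cpp \<mu> x y g _ h(2) w gap _ _ _ that]) simp_all
  have "S \<noteq> 0"
    using h(1) w(1) \<mu> \<delta> unfolding S_def by (intro blinfun_scaleR_left_compose_ne_zero) auto
  moreover have "norm (T + S) \<le> 1" "norm (T - S) \<le> 1"
    using perturbed_le[of 1] perturbed_le[of "- 1"] by simp_all
  ultimately show False
    using not_extreme_point_of_cball_if_perturbation \<open>extreme_contraction T\<close>
    unfolding extreme_contraction_def by blast
qed

end
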